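(* There is a graph that contains every locally finite graph as an induced subgraph but contains no subdivision of $K_{\aleph_0}$.
   Context: All graphs are simple and countable. A graph is locally finite if every vertex has finite degree. *)

theory Defs
  imports Main
begin

text \<open>Countable simple graphs are represented with vertices in nat: a vertex set
V :: nat set and an adjacency relation E :: nat => nat => bool.\<close>

definition simple_graph :: "nat set \<Rightarrow> (nat \<Rightarrow> nat \<Rightarrow> bool) \<Rightarrow> bool" where
  "simple_graph V E \<longleftrightarrow>
     (\<forall>x y. E x y \<longrightarrow> x \<in> V \<and> y \<in> V) \<and>
     (\<forall>x y. E x y \<longrightarrow> E y x) \<and>
     (\<forall>x. \<not> E x x)"

definition locally_finite :: "nat set \<Rightarrow> (nat \<Rightarrow> nat \<Rightarrow> bool) \<Rightarrow> bool" where
  "locally_finite V E \<longleftrightarrow> (\<forall>x\<in>V. finite {y. E x y})"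

definition induced_embedding ::
  "(nat \<Rightarrow> nat) \<Rightarrow> nat set \<Rightarrow> (nat \<Rightarrow> nat \<Rightarrow> bool) \<Rightarrow> nat set \<Rightarrow> (nat \<Rightarrow> nat \<Rightarrow> bool) \<Rightarrow> bool" where
  "induced_embedding f W F V E \<longleftrightarrow>
     inj_on f W \<and> f ` W \<subseteq> V \<and> (\<forall>x\<in>W. \<forall>y\<in>W. F x y \<longleftrightarrow> E (f x) (f y))"

definition is_induced_subgraph_of ::
  "nat set \<Rightarrow> (nat \<Rightarrow> nat \<Rightarrow> bool) \<Rightarrow> nat set \<Rightarrow> (nat \<Rightarrow> nat \<Rightarrow> bool) \<Rightarrow> bool" where
  "is_induced_subgraph_of W F V E \<longleftrightarrow> (\<exists>f. induced_embedding f W F V E)"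

definition is_path :: "(nat \<Rightarrow> nat \<Rightarrow> bool) \<Rightarrow> nat list \<Rightarrow> bool" where
  "is_path E p \<longleftrightarrow> p \<noteq> [] \<and> distinct p \<and> (\<forall>i. Suc i < length p \<longrightarrow> E (p ! i) (p ! Suc i))"

definition inner_vertices :: "nat list \<Rightarrow> nat set" where
  "inner_vertices p = set (butlast (tl p))"

definition contains_TK_aleph0 :: "nat set \<Rightarrow> (nat \<Rightarrow> nat \<Rightarrow> bool) \<Rightarrow> bool" where
  "contains_TK_aleph0 V E \<longleftrightarrow>
     (\<exists>(b :: nat \<Rightarrow> nat) (P :: nat \<Rightarrow> nat \<Rightarrow> nat list).
        inj b \<and> range b \<subseteq> V \<and>
        (\<forall>i j. i < j \<longrightarrow> is_path E (P i j) \<and> set (P i j) \<subseteq> V \<and>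
                 hd (P i j) = b i \<and> last (P i j) = b j \<and>
                 inner_vertices (P i j) \<inter> range b = {}) \<and>
        (\<forall>i j k l. i < j \<longrightarrow> k < l \<longrightarrow> (i, j) \<noteq> (k, l) \<longrightarrow>
                 inner_vertices (P i j) \<inter> inner_vertices (P k l) = {}))"

end

(*
  The universal graph lives on a tree whose nodes are the nonempty finite sequences of
  finite graphs; node ls carries the (finitely many) vertices of the last graph of ls, and
  vertices are adjacent only if their nodes are equal or parent and child.  A walk leaving
  the node of u must pass through the node of u or its parent before it can come back, so
  two branch vertices at different nodes are separated by a finite set and cannot be joined
  by infinitely many internally disjoint paths.  Hence all branch vertices of a subdivided
  K_aleph0 would sit at one node, which carries only finitely many vertices.

  A locally finite graph G embeds by exhausting it with finite sets C_0, C_1, ..., each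
  containing the neighbours of the previous one, and sending x to the node
  (G[C_0], ..., G[C_n]), where n is the first stage containing x: adjacent vertices enter
  at stages at most one apart.
*)

theory Submission
  imports Defs "HOL-Library.Sublist" "HOL-Library.Disjoint_Sets" "HOL-Library.Countable"
    "HOL-Library.Product_Lexorder"
begin

definition tree_step :: "'a list \<Rightarrow> 'a list \<Rightarrow> bool" where
  "tree_step s t \<longleftrightarrow> s = t \<or> (\<exists>l. t = s @ [l]) \<or> (\<exists>l. s = t @ [l])"

lemma tree_step_sym: "tree_step s t \<Longrightarrow> tree_step t s"
  unfolding tree_step_def by blast

lemma tree_step_prefix:
  assumes "tree_step s u" "strict_prefix t s"
  shows "prefix t u"
  using assms unfolding tree_step_def
  by (auto simp: strict_prefix_def intro: prefix_order.trans)

lemma tree_walk_stays_below: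
  assumes "successively tree_step (s # ss @ [v])" "strict_prefix t s" "t \<notin> set ss"
  shows "prefix t v"
  using assms
proof (induction ss arbitrary: s)
  case Nil
  then show ?case by (auto intro: tree_step_prefix)
next
  case (Cons u ss)
  have "strict_prefix t u"
    using Cons.prems tree_step_prefix[of s u t] by (auto intro: strict_prefixI)
  with Cons show ?case by auto
qed

lemma tree_walk_leaving_downwards:
  assumes "successively tree_step (s # ss @ [t])" "ss \<noteq> []"
    and "\<forall>u\<in>set ss. u \<noteq> s \<and> u \<noteq> butlast s"
  shows "prefix s t"
proof -
  obtain u rest where ss: "ss = u # rest" using \<open>ss \<noteq> []\<close> by (cases ss) auto
  with assms have "tree_step s u" "u \<noteq> s" "u \<noteq> butlast s" by auto
  then obtain l where "u = s @ [l]" unfolding tree_step_def by auto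
  then have "strict_prefix s u" by (simp add: strict_prefixI')
  with assms ss show ?thesis by (intro tree_walk_stays_below[of u rest]) auto
qed

lemma tree_walk_separator:
  assumes "successively tree_step (s # ss @ [t])" "ss \<noteq> []"
    and "\<forall>u\<in>set ss. u \<notin> {s, butlast s, t, butlast t}"
  shows "s = t"
proof -
  have "successively (\<lambda>x y. tree_step y x) (s # ss @ [t])"
    using assms(1) by (rule successively_mono) (rule tree_step_sym)
  then have "successively tree_step (t # rev ss @ [s])"
    using successively_rev[of tree_step "s # ss @ [t]"] by simp
  then have "prefix t s" using assms by (intro tree_walk_leaving_downwards[of t "rev ss" s]) auto
  moreover have "prefix s t" using assms by (intro tree_walk_leaving_downwards[of s ss t]) auto
  ultimately show ?thesis by (rule prefix_order.antisym[rotated])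
qed

definition finite_tree_labelling :: "(nat \<Rightarrow> 'a list) \<Rightarrow> nat set \<Rightarrow> (nat \<Rightarrow> nat \<Rightarrow> bool) \<Rightarrow> bool" where
  "finite_tree_labelling node V E \<longleftrightarrow>
     (\<forall>a b. E a b \<longrightarrow> tree_step (node a) (node b)) \<and> (\<forall>t. finite {a\<in>V. node a = t})"

lemma finite_tree_labelling_finitely_many_disjoint_walks:
  assumes lab: "finite_tree_labelling node V E" and "node u \<noteq> node v"
    and disj: "disjoint_family_on (\<lambda>k. set (Q k)) K"
    and walks: "\<forall>k\<in>K. Q k \<noteq> [] \<and> set (Q k) \<subseteq> V \<and> successively E (u # Q k @ [v])"
  shows "finite K"
proof -
  define T where "T = {node u, butlast (node u), node v, butlast (node v)}"
  define S where "S = {a\<in>V. node a \<in> T}"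
  have "S = (\<Union>t\<in>T. {a\<in>V. node a = t})" unfolding S_def by auto
  then have "finite S" using lab unfolding finite_tree_labelling_def T_def by simp
  show ?thesis
  proof (rule ccontr)
    assume "infinite K"
    then obtain k where "k \<in> K" "disjnt S (set (Q k))"
      using \<open>finite S\<close> disj by (rule disjoint_family_elem_disjnt)
    have "successively (\<lambda>a b. tree_step (node a) (node b)) (u # Q k @ [v])"
      using walks \<open>k \<in> K\<close> lab unfolding finite_tree_labelling_def by (blast intro: successively_mono)
    then have "successively tree_step (node u # map node (Q k) @ [node v])"
      using successively_map[of tree_step node "u # Q k @ [v]"] by simp
    moreover have "map node (Q k) \<noteq> []" using walks \<open>k \<in> K\<close> by simp
    moreover have "\<forall>t\<in>set (map node (Q k)). t \<notin> {node u, butlast (node u), node v, butlast (node v)}"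
      using \<open>disjnt S (set (Q k))\<close> walks \<open>k \<in> K\<close> unfolding S_def T_def disjnt_def by auto
    ultimately have "node u = node v" by (rule tree_walk_separator)
    with \<open>node u \<noteq> node v\<close> show False ..
  qed
qed

lemma successively_join:
  "successively E (xs @ [a]) \<Longrightarrow> successively E (a # ys) \<Longrightarrow> successively E (xs @ a # ys)"
  by (cases ys) (auto simp: successively_append_iff successively_Cons)

lemma successively_rev_if_symp: "symp E \<Longrightarrow> successively E xs \<Longrightarrow> successively E (rev xs)"
  unfolding successively_rev by (erule successively_mono) (simp add: symp_def)

lemma path_decompose:
  assumes "is_path E p" "hd p \<noteq> last p"
  shows "p = hd p # butlast (tl p) @ [last p]"
  using assms unfolding is_path_def by (cases p) auto

lemma TK_aleph0_disjoint_walks: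
  assumes "contains_TK_aleph0 V E" "symp E"
  obtains b :: "nat \<Rightarrow> nat" and Q :: "nat \<Rightarrow> nat \<Rightarrow> nat list"
  where "inj b" "range b \<subseteq> V"
    and "\<And>j k. 0 < j \<Longrightarrow> j < k \<Longrightarrow>
           Q j k \<noteq> [] \<and> set (Q j k) \<subseteq> V \<and> successively E (b 0 # Q j k @ [b j])"
    and "\<And>j. 0 < j \<Longrightarrow> disjoint_family_on (\<lambda>k. set (Q j k)) {j<..}"
proof -
  obtain b :: "nat \<Rightarrow> nat" and P :: "nat \<Rightarrow> nat \<Rightarrow> nat list" where "inj b" "range b \<subseteq> V"
    and paths0: "\<forall>i j. i < j \<longrightarrow> is_path E (P i j) \<and> set (P i j) \<subseteq> V \<and>
                 hd (P i j) = b i \<and> last (P i j) = b j \<and> inner_vertices (P i j) \<inter> range b = {}"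
    and disj0: "\<forall>i j k l. i < j \<longrightarrow> k < l \<longrightarrow> (i, j) \<noteq> (k, l) \<longrightarrow>
                 inner_vertices (P i j) \<inter> inner_vertices (P k l) = {}"
    using assms(1) unfolding contains_TK_aleph0_def by (elim exE conjE)
  note paths = paths0[rule_format] and disj = disj0[rule_format]
  define M where "M i j = butlast (tl (P i j))" for i j
  have P_eq: "P i j = b i # M i j @ [b j]" and walk: "successively E (P i j)"
    and M_V: "set (M i j) \<subseteq> V" and M_inner: "set (M i j) = inner_vertices (P i j)"
    if "i < j" for i j
  proof -
    have "b i \<noteq> b j" using that by (simp add: inj_eq[OF \<open>inj b\<close>])
    then show "P i j = b i # M i j @ [b j]"
      using paths[OF that] path_decompose[of E "P i j"] unfolding M_def by auto
    show "successively E (P i j)"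
      using paths[OF that] by (simp add: is_path_def successively_conv_nth)
    show "set (M i j) = inner_vertices (P i j)" unfolding M_def inner_vertices_def ..
    show "set (M i j) \<subseteq> V"
      using paths[OF that] arg_cong[OF \<open>P i j = b i # M i j @ [b j]\<close>, of set] by auto
  qed
  define Q where "Q j k = M 0 k @ b k # rev (M j k)" for j k
  show thesis
  proof (rule that[of b Q, OF \<open>inj b\<close> \<open>range b \<subseteq> V\<close>])
    fix j k :: nat assume "0 < j" "j < k"
    then have "0 < k" by simp
    have "successively E (b 0 # M 0 k @ [b k])"
      using walk[OF \<open>0 < k\<close>] P_eq[OF \<open>0 < k\<close>] by simp
    moreover have "successively E (b k # rev (M j k) @ [b j])"
      using successively_rev_if_symp[OF \<open>symp E\<close> walk[OF \<open>j < k\<close>]] P_eq[OF \<open>j < k\<close>] by simp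
    ultimately have "successively E (b 0 # Q j k @ [b j])"
      unfolding Q_def using successively_join[of E "b 0 # M 0 k" "b k" "rev (M j k) @ [b j]"] by simp
    then show "Q j k \<noteq> [] \<and> set (Q j k) \<subseteq> V \<and> successively E (b 0 # Q j k @ [b j])"
      using M_V[of 0 k] M_V[of j k] \<open>0 < j\<close> \<open>j < k\<close> \<open>range b \<subseteq> V\<close> unfolding Q_def by auto
  next
    fix j :: nat assume "0 < j"
    show "disjoint_family_on (\<lambda>k. set (Q j k)) {j<..}"
      unfolding disjoint_family_on_def
    proof (intro ballI impI)
      fix k k' assume "k \<in> {j<..}" "k' \<in> {j<..}" "k \<noteq> k'"
      then have "0 < k" "0 < k'" "j < k" "j < k'" using \<open>0 < j\<close> by auto
      have "b k \<noteq> b k'" using \<open>k \<noteq> k'\<close> by (simp add: inj_eq[OF \<open>inj b\<close>])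
      have branch: "b k \<notin> set (M i k')" "b k' \<notin> set (M i k)" if "i < k" "i < k'" for i
        using paths[OF that(1)] paths[OF that(2)] M_inner[OF that(1)] M_inner[OF that(2)] by blast+
      have inner: "set (M i k) \<inter> set (M i' k') = {}" if "i < k" "i' < k'" for i i'
        using disj[OF that] M_inner[OF that(1)] M_inner[OF that(2)] \<open>k \<noteq> k'\<close> by auto
      show "set (Q j k) \<inter> set (Q j k') = {}"
        using \<open>b k \<noteq> b k'\<close> branch[of 0] branch[of j] inner[of 0 0] inner[of 0 j] inner[of j 0]
          inner[of j j] \<open>0 < k\<close> \<open>0 < k'\<close> \<open>j < k\<close> \<open>j < k'\<close>
        unfolding Q_def by auto
    qed
  qed
qed

lemma not_contains_TK_aleph0_if_finite_tree_labelling: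
  assumes lab: "finite_tree_labelling node V E" and "symp E"
  shows "\<not> contains_TK_aleph0 V E"
proof
  assume "contains_TK_aleph0 V E"
  then obtain b :: "nat \<Rightarrow> nat" and Q :: "nat \<Rightarrow> nat \<Rightarrow> nat list" where "inj b" "range b \<subseteq> V"
    and walks: "\<And>j k. 0 < j \<Longrightarrow> j < k \<Longrightarrow>
           Q j k \<noteq> [] \<and> set (Q j k) \<subseteq> V \<and> successively E (b 0 # Q j k @ [b j])"
    and disj: "\<And>j. 0 < j \<Longrightarrow> disjoint_family_on (\<lambda>k. set (Q j k)) {j<..}"
    using TK_aleph0_disjoint_walks[OF _ \<open>symp E\<close>] by blast
  have "node (b j) = node (b 0)" for j
  proof (rule ccontr)
    assume "node (b j) \<noteq> node (b 0)"
    then have "0 < j" by (cases j) auto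
    have "finite {j<..}"
      using \<open>node (b j) \<noteq> node (b 0)\<close> walks[OF \<open>0 < j\<close>] disj[OF \<open>0 < j\<close>]
      by (intro finite_tree_labelling_finitely_many_disjoint_walks[OF lab, of "b 0" "b j" "Q j"]) auto
    then show False by (simp add: infinite_Ioi)
  qed
  then have "range b \<subseteq> {a\<in>V. node a = node (b 0)}" using \<open>range b \<subseteq> V\<close> by auto
  then have "finite (range b)" using lab unfolding finite_tree_labelling_def by (blast intro: finite_subset)
  with \<open>inj b\<close> show False by (simp add: finite_image_iff)
qed

text \<open>A finite graph on nat, encoded by its vertex list and its edge list.\<close>
type_synonym layer = "nat list \<times> (nat \<times> nat) list"

definition layer_adj :: "layer \<Rightarrow> nat \<Rightarrow> nat \<Rightarrow> bool" where
  "layer_adj l x y \<longleftrightarrow> (x, y) \<in> set (snd l) \<or> (y, x) \<in> set (snd l)"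

definition tree_vertices :: "(layer list \<times> nat) set" where
  "tree_vertices = {(ls, x). ls \<noteq> [] \<and> x \<in> set (fst (last ls))}"

fun tree_adj :: "layer list \<times> nat \<Rightarrow> layer list \<times> nat \<Rightarrow> bool" where
  "tree_adj (s, x) (t, y) \<longleftrightarrow>
     x \<noteq> y \<and> tree_step s t \<and> (layer_adj (last s) x y \<or> layer_adj (last t) x y)"

definition univ_V :: "nat set" where
  "univ_V = to_nat ` tree_vertices"

definition univ_E :: "nat \<Rightarrow> nat \<Rightarrow> bool" where
  "univ_E a b \<longleftrightarrow> a \<in> univ_V \<and> b \<in> univ_V \<and> tree_adj (from_nat a) (from_nat b)"

definition tree_node :: "nat \<Rightarrow> layer list" where
  "tree_node a = fst (from_nat a :: layer list \<times> nat)"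

lemma tree_adj_sym: "tree_adj p q \<Longrightarrow> tree_adj q p"
  by (cases p; cases q) (auto simp: layer_adj_def dest: tree_step_sym)

lemma tree_adj_tree_step: "tree_adj p q \<Longrightarrow> tree_step (fst p) (fst q)"
  by (cases p; cases q) auto

lemma symp_univ_E: "symp univ_E"
  unfolding univ_E_def by (auto intro: sympI tree_adj_sym)

lemma simple_graph_univ: "simple_graph univ_V univ_E"
  unfolding simple_graph_def using symp_univ_E
  by (auto simp: univ_E_def symp_def elim: tree_adj.elims)

lemma finite_tree_labelling_univ: "finite_tree_labelling tree_node univ_V univ_E"
  unfolding finite_tree_labelling_def
proof (intro conjI allI impI)
  fix a b assume "univ_E a b"
  then show "tree_step (tree_node a) (tree_node b)"
    unfolding univ_E_def tree_node_def by (auto dest: tree_adj_tree_step)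
next
  fix t :: "layer list"
  have "{a\<in>univ_V. tree_node a = t} \<subseteq> to_nat ` Pair t ` set (fst (last t))"
    unfolding univ_V_def tree_vertices_def tree_node_def by auto
  then show "finite {a\<in>univ_V. tree_node a = t}" by (rule finite_subset) simp
qed

primrec exhaustion :: "nat set \<Rightarrow> (nat \<Rightarrow> nat \<Rightarrow> bool) \<Rightarrow> nat \<Rightarrow> nat set" where
  "exhaustion W F 0 = W \<inter> {0}"
| "exhaustion W F (Suc n) = exhaustion W F n \<union> {y. \<exists>x\<in>exhaustion W F n. F x y} \<union> (W \<inter> {Suc n})"

definition exhaustion_layer :: "nat set \<Rightarrow> (nat \<Rightarrow> nat \<Rightarrow> bool) \<Rightarrow> nat \<Rightarrow> layer" where
  "exhaustion_layer W F n =
     (sorted_list_of_set (exhaustion W F n),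
      sorted_list_of_set {(x, y). x \<in> exhaustion W F n \<and> y \<in> exhaustion W F n \<and> F x y})"

definition entry_stage :: "nat set \<Rightarrow> (nat \<Rightarrow> nat \<Rightarrow> bool) \<Rightarrow> nat \<Rightarrow> nat" where
  "entry_stage W F x = (LEAST n. x \<in> exhaustion W F n)"

definition tree_position :: "nat set \<Rightarrow> (nat \<Rightarrow> nat \<Rightarrow> bool) \<Rightarrow> nat \<Rightarrow> layer list" where
  "tree_position W F x = map (exhaustion_layer W F) [0..<Suc (entry_stage W F x)]"

context
  fixes W :: "nat set" and F :: "nat \<Rightarrow> nat \<Rightarrow> bool"
  assumes simple: "simple_graph W F" and loc_fin: "locally_finite W F"
begin

lemma exhaustion_subset: "exhaustion W F n \<subseteq> W"
  using simple by (induction n) (auto simp: simple_graph_def)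

lemma finite_exhaustion: "finite (exhaustion W F n)"
proof (induction n)
  case (Suc n)
  have "{y. \<exists>x\<in>exhaustion W F n. F x y} = (\<Union>x\<in>exhaustion W F n. {y. F x y})" by auto
  then show ?case
    using Suc.IH exhaustion_subset[of n] loc_fin unfolding locally_finite_def by auto
qed simp

lemma exhaustion_mono: "m \<le> n \<Longrightarrow> exhaustion W F m \<subseteq> exhaustion W F n"
  by (induction n) (auto simp: le_Suc_eq)

lemma in_exhaustion_entry_stage: "x \<in> W \<Longrightarrow> x \<in> exhaustion W F (entry_stage W F x)"
  unfolding entry_stage_def by (rule LeastI[of _ x]) (cases x, auto)

lemma entry_stage_adj: "F x y \<Longrightarrow> entry_stage W F y \<le> Suc (entry_stage W F x)"
  using simple in_exhaustion_entry_stage[of x]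
  unfolding entry_stage_def simple_graph_def by (auto intro!: Least_le)

lemma set_exhaustion_layer:
  "set (fst (exhaustion_layer W F n)) = exhaustion W F n"
  "set (snd (exhaustion_layer W F n)) =
     {(x, y). x \<in> exhaustion W F n \<and> y \<in> exhaustion W F n \<and> F x y}"
proof -
  have "{(x, y). x \<in> exhaustion W F n \<and> y \<in> exhaustion W F n \<and> F x y}
          \<subseteq> exhaustion W F n \<times> exhaustion W F n" by auto
  then show "set (snd (exhaustion_layer W F n)) =
     {(x, y). x \<in> exhaustion W F n \<and> y \<in> exhaustion W F n \<and> F x y}"
    unfolding exhaustion_layer_def using finite_exhaustion by (simp add: finite_subset)
qed (simp add: exhaustion_layer_def finite_exhaustion)

lemma layer_adj_exhaustion_layer:
  "layer_adj (exhaustion_layer W F n) x y \<longleftrightarrow>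
     x \<in> exhaustion W F n \<and> y \<in> exhaustion W F n \<and> F x y"
  using simple unfolding layer_adj_def set_exhaustion_layer simple_graph_def by auto

lemma tree_position_in_tree_vertices: "x \<in> W \<Longrightarrow> (tree_position W F x, x) \<in> tree_vertices"
  unfolding tree_vertices_def tree_position_def
  using in_exhaustion_entry_stage set_exhaustion_layer(1) by simp

lemma tree_adj_tree_position_iff:
  assumes "x \<in> W" "y \<in> W"
  shows "tree_adj (tree_position W F x, x) (tree_position W F y, y) \<longleftrightarrow> F x y"
proof
  assume "tree_adj (tree_position W F x, x) (tree_position W F y, y)"
  then show "F x y"
    unfolding tree_position_def by (auto simp: layer_adj_exhaustion_layer)
next
  assume "F x y"
  define m n where "m = entry_stage W F x" and "n = entry_stage W F y"
  have "n \<le> Suc m" "m \<le> Suc n"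
    using entry_stage_adj \<open>F x y\<close> simple unfolding m_def n_def simple_graph_def by blast+
  moreover have "x \<in> exhaustion W F (max m n)" "y \<in> exhaustion W F (max m n)"
    using in_exhaustion_entry_stage assms exhaustion_mono unfolding m_def n_def
    by (meson max.cobounded1 max.cobounded2 subsetD)+
  moreover have "x \<noteq> y" using \<open>F x y\<close> simple unfolding simple_graph_def by blast
  ultimately show "tree_adj (tree_position W F x, x) (tree_position W F y, y)"
    using \<open>F x y\<close> unfolding tree_position_def m_def[symmetric] n_def[symmetric]
    by (auto simp: tree_step_def layer_adj_exhaustion_layer le_Suc_eq max_def)
qed

lemma induced_subgraph_univ: "is_induced_subgraph_of W F univ_V univ_E"
  unfolding is_induced_subgraph_of_def induced_embedding_def
proof (intro exI conjI)
  let ?f = "\<lambda>x. to_nat (tree_position W F x, x)"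
  show "inj_on ?f W" by (auto intro: inj_onI)
  show "?f ` W \<subseteq> univ_V" unfolding univ_V_def using tree_position_in_tree_vertices by auto
  show "\<forall>x\<in>W. \<forall>y\<in>W. F x y \<longleftrightarrow> univ_E (?f x) (?f y)"
    using tree_position_in_tree_vertices tree_adj_tree_position_iff
    unfolding univ_E_def univ_V_def by auto
qed

end

theorem mainTheorem19:
  shows "\<exists>(V :: nat set) (E :: nat \<Rightarrow> nat \<Rightarrow> bool).
           simple_graph V E \<and>
           (\<forall>(W :: nat set) (F :: nat \<Rightarrow> nat \<Rightarrow> bool).
              simple_graph W F \<and> locally_finite W F \<longrightarrow> is_induced_subgraph_of W F V E) \<and>
           \<not> contains_TK_aleph0 V E"
  using simple_graph_univ induced_subgraph_univ
    not_contains_TK_aleph0_if_finite_tree_labelling[OF finite_tree_labelling_univ symp_univ_E]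
  by blast

end
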